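(* Let $\Gamma\cup\{A\}\subseteq\mathcal{L}_\infty$ and let $t$ be the translation described in the context. (i) If $\Gamma^t\vdash_{\mathbf{K4}(Q)}A^t$, then $\Gamma\vdash_{\mathbf{K4}_h}A$. (ii) If $\Gamma^t\vdash_{\mathbf{S4}(Q)}A^t$, then $\Gamma\vdash_{\mathbf{S4}_h}A$.
   Context: The language $\mathcal{L}_\infty$ consists of modal formulas built from propositional atoms, $\bot,\top$, the connectives $\neg,\wedge,\vee,\rightarrow$ and unary modalities $\Box_n$ ($n\in\mathbb{N}$), with the restriction that $\Box_n A$ is a formula only if $n$ is strictly greater than the index of every box occurring in $A$. Axiom instances are only those that are $\mathcal{L}_\infty$-formulas. Axiom schemes (for all $n\ge0$): $\mathbf{H}$: $\Box_n A\rightarrow\Box_{n+1}A$; $\mathbf{K}_h$: $\Box_n(A\rightarrow B)\rightarrow(\Box_nA\rightarrow\Box_nB)$; $\mathbf{4}_h$: $\Box_nA\rightarrow\Box_{n+1}\Box_nA$; $\mathbf{T}_h$: $\Box_nA\rightarrow A$. For a set $X$ of schemes, $L(X)$ is the least set of $\mathcal{L}_\infty$-formulas containing all classical propositional tautologies and all instances of the schemes in $X$, closed under modus ponens and the rule: from $A$ infer $\Box_nA$ for any $n$ greater than all box indices in $A$. $\mathbf{K4}_h=L(\mathbf{H},\mathbf{K}_h,\mathbf{4}_h)$, $\mathbf{S4}_h=L(\mathbf{H},\mathbf{K}_h,\mathbf{4}_h,\mathbf{T}_h)$. For a set $\Gamma$, $\Gamma\vdash_LA$ means $\bigwedge\Delta\rightarrow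 A\in L$ for some finite $\Delta\subseteq\Gamma$ (analogously for the ordinary logics below). Let $Q=\{q_n\}_{n\ge0}$ be new propositional atoms not occurring in $\mathcal{L}_\infty$-formulas, and let $\mathcal{L}_\Box(Q)$ be the ordinary unimodal language (single modality $\Box$) over the atoms together with $Q$; $\mathbf{K4}(Q)$ and $\mathbf{S4}(Q)$ are the usual modal logics $\mathbf{K4}$ and $\mathbf{S4}$ in this language. The translation $t:\mathcal{L}_\infty\to\mathcal{L}_\Box(Q)$: $p^t=p$ for atoms, $t$ commutes with $\neg,\wedge,\vee,\rightarrow$, and $(\Box_nA)^t=\Box(\bigwedge_{i=0}^n q_i\rightarrow A^t)$. $\Gamma^t=\{B^t:B\in\Gamma\}$. *)

theory Defs
  imports Main
begin

datatype 'a fm =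
    Atom 'a | Bot | Top | Neg "'a fm" | Conj "'a fm" "'a fm" | Disj "'a fm" "'a fm"
  | Imp "'a fm" "'a fm" | Box nat "'a fm"

primrec boxes :: "'a fm \<Rightarrow> nat set" where
  "boxes (Atom p) = {}"
| "boxes Bot = {}"
| "boxes Top = {}"
| "boxes (Neg A) = boxes A"
| "boxes (Conj A B) = boxes A \<union> boxes B"
| "boxes (Disj A B) = boxes A \<union> boxes B"
| "boxes (Imp A B) = boxes A \<union> boxes B"
| "boxes (Box n A) = insert n (boxes A)"

primrec wf :: "'a fm \<Rightarrow> bool" where
  "wf (Atom p) = True"
| "wf Bot = True"
| "wf Top = True"
| "wf (Neg A) = wf A"
| "wf (Conj A B) = (wf A \<and> wf B)"
| "wf (Disj A B) = (wf A \<and> wf B)"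
| "wf (Imp A B) = (wf A \<and> wf B)"
| "wf (Box n A) = (wf A \<and> (\<forall>m\<in>boxes A. m < n))"

primrec peval :: "('a \<Rightarrow> bool) \<Rightarrow> (nat \<Rightarrow> 'a fm \<Rightarrow> bool) \<Rightarrow> 'a fm \<Rightarrow> bool" where
  "peval V W (Atom p) = V p"
| "peval V W Bot = False"
| "peval V W Top = True"
| "peval V W (Neg A) = (\<not> peval V W A)"
| "peval V W (Conj A B) = (peval V W A \<and> peval V W B)"
| "peval V W (Disj A B) = (peval V W A \<or> peval V W B)"
| "peval V W (Imp A B) = (peval V W A \<longrightarrow> peval V W B)"
| "peval V W (Box n A) = W n A"

definition ptaut :: "'a fm \<Rightarrow> bool" where
  "ptaut A \<longleftrightarrow> (\<forall>V W. peval V W A)"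

inductive Lh :: "bool \<Rightarrow> 'a fm \<Rightarrow> bool" for withT :: bool where
  taut: "wf A \<Longrightarrow> ptaut A \<Longrightarrow> Lh withT A"
| axH: "wf (Imp (Box n A) (Box (Suc n) A)) \<Longrightarrow> Lh withT (Imp (Box n A) (Box (Suc n) A))"
| axK: "wf (Imp (Box n (Imp A B)) (Imp (Box n A) (Box n B))) \<Longrightarrow>
          Lh withT (Imp (Box n (Imp A B)) (Imp (Box n A) (Box n B)))"
| ax4: "wf (Imp (Box n A) (Box (Suc n) (Box n A))) \<Longrightarrow>
          Lh withT (Imp (Box n A) (Box (Suc n) (Box n A)))"
| axT: "withT \<Longrightarrow> wf (Imp (Box n A) A) \<Longrightarrow> Lh withT (Imp (Box n A) A)"
| mp: "Lh withT A \<Longrightarrow> Lh withT (Imp A B) \<Longrightarrow> Lh withT B"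
| nec: "Lh withT A \<Longrightarrow> (\<forall>m\<in>boxes A. m < n) \<Longrightarrow> Lh withT (Box n A)"

abbreviation K4h :: "'a fm \<Rightarrow> bool" where "K4h \<equiv> Lh False"
abbreviation S4h :: "'a fm \<Rightarrow> bool" where "S4h \<equiv> Lh True"

definition bigConj :: "'a fm list \<Rightarrow> 'a fm" where
  "bigConj ds = foldr Conj ds Top"

definition Lh_derives :: "bool \<Rightarrow> 'a fm set \<Rightarrow> 'a fm \<Rightarrow> bool" where
  "Lh_derives withT \<Gamma> A \<longleftrightarrow> (\<exists>ds. set ds \<subseteq> \<Gamma> \<and> Lh withT (Imp (bigConj ds) A))"

datatype 'b mfm =
    MAtom 'b | MBot | MTop | MNeg "'b mfm" | MConj "'b mfm" "'b mfm" | MDisj "'b mfm" "'b mfm"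
  | MImp "'b mfm" "'b mfm" | MBox "'b mfm"

primrec meval :: "('b \<Rightarrow> bool) \<Rightarrow> ('b mfm \<Rightarrow> bool) \<Rightarrow> 'b mfm \<Rightarrow> bool" where
  "meval V W (MAtom p) = V p"
| "meval V W MBot = False"
| "meval V W MTop = True"
| "meval V W (MNeg A) = (\<not> meval V W A)"
| "meval V W (MConj A B) = (meval V W A \<and> meval V W B)"
| "meval V W (MDisj A B) = (meval V W A \<or> meval V W B)"
| "meval V W (MImp A B) = (meval V W A \<longrightarrow> meval V W B)"
| "meval V W (MBox A) = W A"

definition mtaut :: "'b mfm \<Rightarrow> bool" where
  "mtaut A \<longleftrightarrow> (\<forall>V W. meval V W A)"

text \<open>Ordinary K4 (withT = False) and S4 (withT = True).\<close>
inductive Lm :: "bool \<Rightarrow> 'b mfm \<Rightarrow> bool" for withT :: bool where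
  taut: "mtaut A \<Longrightarrow> Lm withT A"
| axK: "Lm withT (MImp (MBox (MImp A B)) (MImp (MBox A) (MBox B)))"
| ax4: "Lm withT (MImp (MBox A) (MBox (MBox A)))"
| axT: "withT \<Longrightarrow> Lm withT (MImp (MBox A) A)"
| mp: "Lm withT A \<Longrightarrow> Lm withT (MImp A B) \<Longrightarrow> Lm withT B"
| nec: "Lm withT A \<Longrightarrow> Lm withT (MBox A)"

definition mBigConj :: "'b mfm list \<Rightarrow> 'b mfm" where
  "mBigConj ds = foldr MConj ds MTop"

definition Lm_derives :: "bool \<Rightarrow> 'b mfm set \<Rightarrow> 'b mfm \<Rightarrow> bool" where
  "Lm_derives withT \<Gamma> A \<longleftrightarrow> (\<exists>ds. set ds \<subseteq> \<Gamma> \<and> Lm withT (MImp (mBigConj ds) A))"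

section \<open>The translation t into L_Box(Q); the new atoms q_n are Inr n\<close>

primrec qconj :: "nat \<Rightarrow> ('a + nat) mfm" where
  "qconj 0 = MAtom (Inr 0)"
| "qconj (Suc n) = MConj (qconj n) (MAtom (Inr (Suc n)))"

primrec tr :: "'a fm \<Rightarrow> ('a + nat) mfm" where
  "tr (Atom p) = MAtom (Inl p)"
| "tr Bot = MBot"
| "tr Top = MTop"
| "tr (Neg A) = MNeg (tr A)"
| "tr (Conj A B) = MConj (tr A) (tr B)"
| "tr (Disj A B) = MDisj (tr A) (tr B)"
| "tr (Imp A B) = MImp (tr A) (tr B)"
| "tr (Box n A) = MBox (MImp (qconj n) (tr A))"

end

theory Submission
  imports Defs
begin

text \<open>Fix a level \<open>k\<close> and read a formula of \<open>\<L>\<^sub>\<box>(Q)\<close> back into \<open>\<L>\<^sub>\<infinity>\<close>: the atom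
  \<open>q\<^sub>i\<close> becomes \<open>\<top>\<close> if \<open>i \<le> k\<close> and \<open>\<bottom>\<close> otherwise, and \<open>\<box>\<psi>\<close> becomes
  \<open>\<And>\<^sub>m\<^sub><\<^sub>k \<box>\<^sub>m\<psi>\<^sub>m\<close> (conjoined with \<open>\<psi>\<^sub>k\<close> for \<open>S4\<close>), where \<open>\<psi>\<^sub>m\<close> is \<open>\<psi>\<close> read at level \<open>m\<close>.
  The readings are well-formed, and every theorem of \<open>K4(Q)\<close> resp. \<open>S4(Q)\<close> reads at every
  level as a theorem of \<open>K4\<^sub>h\<close> resp. \<open>S4\<^sub>h\<close>: axiom \<open>4\<close> becomes a consequence of \<open>4\<^sub>h\<close> and \<open>H\<close>,
  and axiom \<open>T\<close> becomes a tautology. Conversely, if \<open>k\<close> exceeds every box index of \<open>C\<close>, the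
  reading of \<open>C\<^sup>t\<close> is provably equivalent to \<open>C\<close>: in the reading of \<open>(\<box>\<^sub>nA)\<^sup>t\<close> the conjuncts
  \<open>\<box>\<^sub>m(q\<^sub>0\<and>\<dots>\<and>q\<^sub>n \<rightarrow> A)\<close> with \<open>m < n\<close> are trivial, the remaining ones are equivalent to
  \<open>\<box>\<^sub>mA\<close> and follow from \<open>\<box>\<^sub>nA\<close> by \<open>H\<close>, and the extra conjunct for \<open>S4\<close> follows by \<open>T\<^sub>h\<close>.
  Applying both facts to \<open>\<And>\<Delta> \<rightarrow> A\<close> proves the theorem.\<close>

lemma wf_if_Lh: "Lh T A \<Longrightarrow> wf A"
  by (induction rule: Lh.induct) auto

lemma bigConj_simps [simp]:
  "bigConj [] = Top"
  "bigConj (A # As) = Conj A (bigConj As)"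
  by (simp_all add: bigConj_def)

lemma peval_bigConj [simp]: "peval V W (bigConj As) \<longleftrightarrow> (\<forall>A\<in>set As. peval V W A)"
  by (induction As) auto

lemma boxes_bigConj [simp]: "boxes (bigConj As) = (\<Union>A\<in>set As. boxes A)"
  by (induction As) auto

lemma wf_bigConj [simp]: "wf (bigConj As) \<longleftrightarrow> (\<forall>A\<in>set As. wf A)"
  by (induction As) auto

lemma Lh_bigConj: "\<forall>A\<in>set As. Lh T A \<Longrightarrow> Lh T (bigConj As)"
proof (induction As)
  case Nil
  show ?case by (auto simp: ptaut_def intro: Lh.taut)
next
  case (Cons A As)
  then have A: "Lh T A" and As: "Lh T (bigConj As)" by auto
  have "Lh T (Imp A (Imp (bigConj As) (Conj A (bigConj As))))"
    by (rule Lh.taut) (use wf_if_Lh[OF A] wf_if_Lh[OF As] in \<open>auto simp: ptaut_def\<close>)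
  then show ?case using A As by (auto intro: Lh.mp)
qed

lemma Lh_propositional_consequence:
  assumes "finite F" "\<forall>A\<in>F. Lh T A" "wf C"
    and "\<And>V W. \<forall>A\<in>F. peval V W A \<Longrightarrow> peval V W C"
  shows "Lh T C"
proof -
  obtain As where As: "set As = F" using finite_list[OF assms(1)] by blast
  have conj: "Lh T (bigConj As)" using Lh_bigConj assms(2) As by blast
  have "Lh T (Imp (bigConj As) C)"
    by (rule Lh.taut) (use wf_if_Lh[OF conj] assms(3,4) As in \<open>auto simp: ptaut_def\<close>)
  with conj show ?thesis by (rule Lh.mp)
qed

lemma Lh_imp_trans: "Lh T (Imp A B) \<Longrightarrow> Lh T (Imp B C) \<Longrightarrow> Lh T (Imp A C)"
  by (rule Lh_propositional_consequence[of "{Imp A B, Imp B C}"])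
    (auto dest: wf_if_Lh)

lemma Lh_Box_mono:
  assumes "Lh T (Imp A B)" "\<forall>m\<in>boxes A \<union> boxes B. m < n"
  shows "Lh T (Imp (Box n A) (Box n B))"
proof -
  have "Lh T (Box n (Imp A B))" using assms by (auto intro: Lh.nec)
  moreover have "Lh T (Imp (Box n (Imp A B)) (Imp (Box n A) (Box n B)))"
    by (rule Lh.axK) (use wf_if_Lh[OF assms(1)] assms(2) in auto)
  ultimately show ?thesis by (rule Lh.mp)
qed

lemma Lh_Conj_Box:
  assumes "wf (Box n A)" "wf (Box n B)"
  shows "Lh T (Imp (Conj (Box n A) (Box n B)) (Box n (Conj A B)))"
proof -
  have "Lh T (Imp A (Imp B (Conj A B)))"
    by (rule Lh.taut) (use assms in \<open>auto simp: ptaut_def\<close>)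
  then have "Lh T (Imp (Box n A) (Box n (Imp B (Conj A B))))"
    by (rule Lh_Box_mono) (use assms in auto)
  moreover have "Lh T (Imp (Box n (Imp B (Conj A B))) (Imp (Box n B) (Box n (Conj A B))))"
    by (rule Lh.axK) (use assms in auto)
  ultimately show ?thesis
    by (intro Lh_propositional_consequence[of "{Imp (Box n A) (Box n (Imp B (Conj A B))),
        Imp (Box n (Imp B (Conj A B))) (Imp (Box n B) (Box n (Conj A B)))}"])
      (use assms in auto)
qed

lemma Lh_bigConj_Box:
  "\<forall>A\<in>set As. wf (Box n A) \<Longrightarrow> Lh T (Imp (bigConj (map (Box n) As)) (Box n (bigConj As)))"
proof (induction As)
  case Nil
  have "Lh T (Top :: 'a fm)" by (rule Lh.taut) (auto simp: ptaut_def)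
  then have "Lh T (Box n (Top :: 'a fm))" by (auto intro: Lh.nec)
  then show ?case by (intro Lh_propositional_consequence[of "{Box n Top}"]) auto
next
  case (Cons A As)
  then have "Lh T (Imp (bigConj (map (Box n) As)) (Box n (bigConj As)))" by simp
  moreover have "Lh T (Imp (Conj (Box n A) (Box n (bigConj As))) (Box n (Conj A (bigConj As))))"
    by (rule Lh_Conj_Box) (use Cons.prems in auto)
  ultimately show ?case
    by (intro Lh_propositional_consequence[of "{Imp (bigConj (map (Box n) As)) (Box n (bigConj As)),
        Imp (Conj (Box n A) (Box n (bigConj As))) (Box n (Conj A (bigConj As)))}"])
      (use Cons.prems in auto)
qed

lemma Lh_Box_index_mono:
  assumes "wf (Box n A)" "n \<le> m"
  shows "Lh T (Imp (Box n A) (Box m A))"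
  using assms(2)
proof (induction m rule: dec_induct)
  case base
  show ?case by (intro Lh.taut) (use assms in \<open>auto simp: ptaut_def\<close>)
next
  case (step m)
  moreover have "Lh T (Imp (Box m A) (Box (Suc m) A))"
    by (rule Lh.axH) (use assms step.hyps in auto)
  ultimately show ?case by (blast intro: Lh_imp_trans)
qed

lemma Lh_Box_Box: "wf (Box n A) \<Longrightarrow> n < m \<Longrightarrow> Lh T (Imp (Box n A) (Box m (Box n A)))"
  by (rule Lh_imp_trans[OF Lh.ax4 Lh_Box_index_mono]) auto

definition boxed_below :: "(nat \<Rightarrow> 'a fm) \<Rightarrow> nat \<Rightarrow> 'a fm" where
  "boxed_below f k = bigConj (map (\<lambda>m. Box m (f m)) [0..<k])"

definition boxed :: "bool \<Rightarrow> (nat \<Rightarrow> 'a fm) \<Rightarrow> nat \<Rightarrow> 'a fm" where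
  "boxed T f k = (if T then Conj (f k) (boxed_below f k) else boxed_below f k)"

lemma peval_boxed_below [simp]: "peval V W (boxed_below f k) \<longleftrightarrow> (\<forall>m<k. W m (f m))"
  by (auto simp: boxed_below_def)

lemma wf_boxed_below: "\<forall>m<k. wf (Box m (f m)) \<Longrightarrow> wf (Box k (boxed_below f k))"
  by (fastforce simp: boxed_below_def dest: less_trans)

lemma wf_boxed: "\<forall>m. wf (Box m (f m)) \<Longrightarrow> wf (Box k (boxed T f k))"
  using wf_boxed_below[of k f] by (auto simp: boxed_def)

lemma Lh_boxed_below_Box_boxed:
  assumes f: "\<forall>m. wf (Box m (f m))" and "m < k"
  shows "Lh T (Imp (boxed_below f k) (Box m (boxed T f m)))"
proof -
  let ?B = "Conj (f m) (boxed_below f m)"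
  have wf_below: "wf (Box m (boxed_below f m))" using f wf_boxed_below by blast
  have four: "Lh T (Imp (Box l (f l)) (Box m (Box l (f l))))" if "l < m" for l
    using Lh_Box_Box f that by blast
  have distrib: "Lh T (Imp (bigConj (map (Box m) (map (\<lambda>l. Box l (f l)) [0..<m])))
      (Box m (boxed_below f m)))"
    unfolding boxed_below_def by (rule Lh_bigConj_Box) (use f in \<open>fastforce dest: less_trans\<close>)
  have conj: "Lh T (Imp (Conj (Box m (f m)) (Box m (boxed_below f m))) (Box m ?B))"
    by (rule Lh_Conj_Box) (use f wf_below in auto)
  have B: "Lh T (Imp (boxed_below f k) (Box m ?B))"
  proof (rule Lh_propositional_consequence [of "{Imp (bigConj (map (Box m)
      (map (\<lambda>l. Box l (f l)) [0..<m]))) (Box m (boxed_below f m)),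
      Imp (Conj (Box m (f m)) (Box m (boxed_below f m))) (Box m ?B)}
      \<union> (\<lambda>l. Imp (Box l (f l)) (Box m (Box l (f l)))) ` {..<m}"])
    show "wf (Imp (boxed_below f k) (Box m ?B))"
      using f wf_below wf_boxed_below[of k f] by auto
  qed (use distrib conj four \<open>m < k\<close> in auto)
  show ?thesis
  proof (cases T)
    case False
    have "Lh T (Imp ?B (boxed_below f m))"
      by (rule Lh.taut) (use f wf_below in \<open>auto simp: ptaut_def\<close>)
    then have "Lh T (Imp (Box m ?B) (Box m (boxed_below f m)))"
      by (rule Lh_Box_mono) (use f wf_below in auto)
    with B False show ?thesis by (auto simp: boxed_def intro: Lh_imp_trans)
  qed (use B in \<open>simp add: boxed_def\<close>)
qed

lemma Lh_boxed_K:
  assumes "\<forall>m. wf (Box m (f m))" "\<forall>m. wf (Box m (g m))"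
  shows "Lh T (Imp (boxed T (\<lambda>m. Imp (f m) (g m)) k) (Imp (boxed T f k) (boxed T g k)))"
proof (rule Lh_propositional_consequence
    [of "(\<lambda>m. Imp (Box m (Imp (f m) (g m))) (Imp (Box m (f m)) (Box m (g m)))) ` {..<k}"])
  show "\<forall>A\<in>(\<lambda>m. Imp (Box m (Imp (f m) (g m))) (Imp (Box m (f m)) (Box m (g m)))) ` {..<k}. Lh T A"
    using assms by (auto intro!: Lh.axK)
  have "\<forall>m. wf (Box m (Imp (f m) (g m)))" using assms by auto
  from wf_boxed[OF this] wf_boxed[OF assms(1)] wf_boxed[OF assms(2)]
  show "wf (Imp (boxed T (\<lambda>m. Imp (f m) (g m)) k) (Imp (boxed T f k) (boxed T g k)))"
    by simp
qed (auto simp: boxed_def)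

lemma Lh_boxed_4:
  assumes f: "\<forall>m. wf (Box m (f m))"
  shows "Lh T (Imp (boxed T f k) (boxed T (boxed T f) k))"
proof (rule Lh_propositional_consequence
    [of "(\<lambda>m. Imp (boxed_below f k) (Box m (boxed T f m))) ` {..<k}"])
  have wf_fm: "\<forall>m. wf (Box m (boxed T f m))" using wf_boxed[OF f] by blast
  from wf_boxed[OF wf_fm] wf_fm show "wf (Imp (boxed T f k) (boxed T (boxed T f) k))" by simp
qed (use Lh_boxed_below_Box_boxed[OF f] in \<open>auto simp: boxed_def\<close>)

lemma Lh_boxed_nec:
  assumes "\<forall>m. Lh T (f m)" "\<forall>m. wf (Box m (f m))"
  shows "Lh T (boxed T f k)"
  by (rule Lh_propositional_consequence[of "insert (f k) ((\<lambda>m. Box m (f m)) ` {..<k})"])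
    (use assms wf_boxed[OF assms(2)] in \<open>auto simp: boxed_def intro: Lh.nec\<close>)

primrec read_at :: "bool \<Rightarrow> ('a + nat) mfm \<Rightarrow> nat \<Rightarrow> 'a fm" where
  "read_at T (MAtom p) k = (case p of Inl a \<Rightarrow> Atom a | Inr i \<Rightarrow> if i \<le> k then Top else Bot)"
| "read_at T MBot k = Bot"
| "read_at T MTop k = Top"
| "read_at T (MNeg A) k = Neg (read_at T A k)"
| "read_at T (MConj A B) k = Conj (read_at T A k) (read_at T B k)"
| "read_at T (MDisj A B) k = Disj (read_at T A k) (read_at T B k)"
| "read_at T (MImp A B) k = Imp (read_at T A k) (read_at T B k)"
| "read_at T (MBox A) k = boxed T (read_at T A) k"

lemma read_at_MImp_eq: "read_at T (MImp A B) = (\<lambda>k. Imp (read_at T A k) (read_at T B k))"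
  by (rule ext) simp

lemma read_at_MBox_eq: "read_at T (MBox A) = boxed T (read_at T A)"
  by (rule ext) simp

lemma wf_read_at: "wf (Box k (read_at T \<phi> k))"
proof (induction \<phi> arbitrary: k)
  case (MAtom p)
  then show ?case by (cases p) auto
next
  case (MBox \<phi>)
  then show ?case by (simp only: read_at.simps) (rule wf_boxed, blast)
qed auto

lemma peval_read_at:
  "peval V W (read_at T \<phi> k) =
    meval (\<lambda>p. peval V W (read_at T (MAtom p) k)) (\<lambda>\<psi>. peval V W (read_at T (MBox \<psi>) k)) \<phi>"
  by (induction \<phi>) auto

lemma Lh_read_at: "Lm T \<phi> \<Longrightarrow> Lh T (read_at T \<phi> k)"
proof (induction arbitrary: k rule: Lm.induct)
  case (taut A)
  show ?case
  proof (rule Lh.taut)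
    show "wf (read_at T A k)" using wf_read_at[of k T A] by simp
    show "ptaut (read_at T A k)"
      using taut unfolding ptaut_def mtaut_def by (subst peval_read_at) blast
  qed
next
  case (axK A B)
  have "Lh T (Imp (boxed T (\<lambda>m. Imp (read_at T A m) (read_at T B m)) k)
      (Imp (boxed T (read_at T A) k) (boxed T (read_at T B) k)))"
    by (rule Lh_boxed_K) (use wf_read_at in blast)+
  then show ?case by (simp add: read_at_MImp_eq)
next
  case (ax4 A)
  have "Lh T (Imp (boxed T (read_at T A) k) (boxed T (boxed T (read_at T A)) k))"
    by (rule Lh_boxed_4) (use wf_read_at in blast)
  then show ?case by (simp add: read_at_MBox_eq)
next
  case (axT A)
  show ?case
    by (rule Lh.taut) (use axT wf_read_at[of k T "MImp (MBox A) A"] in \<open>auto simp: ptaut_def boxed_def\<close>)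
next
  case (mp A B)
  then show ?case by (auto intro: Lh.mp)
next
  case (nec A)
  have "Lh T (boxed T (read_at T A) k)"
    by (rule Lh_boxed_nec) (use nec.IH wf_read_at in blast)+
  then show ?case by simp
qed

definition Lh_equiv :: "bool \<Rightarrow> 'a fm \<Rightarrow> 'a fm \<Rightarrow> bool" where
  "Lh_equiv T A B \<longleftrightarrow> Lh T (Imp A B) \<and> Lh T (Imp B A)"

lemma Lh_equiv_cong:
  assumes "Lh_equiv T A A'" "Lh_equiv T B B'"
  shows "Lh_equiv T (Neg A) (Neg A')" "Lh_equiv T (Conj A B) (Conj A' B')"
    "Lh_equiv T (Disj A B) (Disj A' B')" "Lh_equiv T (Imp A B) (Imp A' B')"
proof -
  have L: "Lh T (Imp A A')" "Lh T (Imp A' A)" "Lh T (Imp B B')" "Lh T (Imp B' B)"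
    using assms by (simp_all add: Lh_equiv_def)
  then have "wf A" "wf A'" "wf B" "wf B'" by (auto dest: wf_if_Lh)
  with L show "Lh_equiv T (Neg A) (Neg A')" "Lh_equiv T (Conj A B) (Conj A' B')"
    "Lh_equiv T (Disj A B) (Disj A' B')" "Lh_equiv T (Imp A B) (Imp A' B')"
    unfolding Lh_equiv_def
    by (auto intro!: Lh_propositional_consequence[of "{Imp A A', Imp A' A, Imp B B', Imp B' B}"])
qed

lemma peval_read_at_qconj [simp]: "peval V W (read_at T (qconj n) m) \<longleftrightarrow> n \<le> m"
  by (induction n) auto

lemma boxes_read_at_qconj [simp]: "boxes (read_at T (qconj n) m) = {}"
  and wf_read_at_qconj [simp]: "wf (read_at T (qconj n) m)"
  by (induction n) auto

lemma Lh_equiv_boxed_guarded: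
  fixes T :: bool and n :: nat and g :: "nat \<Rightarrow> 'a fm"
  defines "h \<equiv> \<lambda>m. Imp (read_at T (qconj n) m) (g m)"
  assumes A: "wf (Box n A)" and "n < k"
    and g: "\<forall>m. wf (Box m (g m))" and g_equiv: "\<forall>m\<ge>n. Lh_equiv T (g m) A"
  shows "Lh_equiv T (boxed T h k) (Box n A)"
proof -
  have h: "wf (Box m (h m))" for m using g by (simp add: h_def)
  have wf_boxed_h: "wf (boxed T h k)" using wf_boxed[of h k T] h by simp
  have "Lh T (Imp (h n) A)"
    by (rule Lh_propositional_consequence[of "{Imp (g n) A}"])
      (use g_equiv h[of n] A in \<open>auto simp: h_def Lh_equiv_def\<close>)
  then have Box_n: "Lh T (Imp (Box n (h n)) (Box n A))"
    by (rule Lh_Box_mono) (use h[of n] A in auto)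
  have to_Box: "Lh T (Imp (boxed T h k) (Box n A))"
    by (rule Lh_propositional_consequence[of "{Imp (Box n (h n)) (Box n A)}"])
      (use Box_n A wf_boxed_h \<open>n < k\<close> in \<open>auto simp: boxed_def\<close>)
  have Box_h: "Lh T (Imp (Box n A) (Box m (h m)))" for m
  proof (cases "m < n")
    case True
    have "Lh T (h m)" by (rule Lh.taut) (use h[of m] True in \<open>auto simp: ptaut_def h_def\<close>)
    then have "Lh T (Box m (h m))" using h[of m] by (auto intro: Lh.nec)
    then show ?thesis
      by (intro Lh_propositional_consequence[of "{Box m (h m)}"]) (use A h[of m] in auto)
  next
    case False
    have "Lh T (Imp A (h m))"
      by (rule Lh_propositional_consequence[of "{Imp A (g m)}"])
        (use g_equiv False h[of m] A in \<open>auto simp: h_def Lh_equiv_def\<close>)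
    then have "Lh T (Imp (Box m A) (Box m (h m)))"
      by (rule Lh_Box_mono) (use h[of m] A False in auto)
    with Lh_Box_index_mono[OF A] False show ?thesis by (meson Lh_imp_trans not_less)
  qed
  have h_k: "Lh T (Imp (Box n A) (h k))" if T
  proof -
    have "Lh T (Imp A (h k))"
      by (rule Lh_propositional_consequence[of "{Imp A (g k)}"])
        (use g_equiv \<open>n < k\<close> h[of k] A in \<open>auto simp: h_def Lh_equiv_def\<close>)
    with Lh.axT[OF that] A show ?thesis by (auto intro: Lh_imp_trans)
  qed
  have from_Box: "Lh T (Imp (Box n A) (boxed T h k))"
  proof (rule Lh_propositional_consequence
      [of "(\<lambda>m. Imp (Box n A) (Box m (h m))) ` {..<k} \<union> (if T then {Imp (Box n A) (h k)} else {})"])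
    show "wf (Imp (Box n A) (boxed T h k))" using A wf_boxed_h by simp
  qed (use Box_h h_k in \<open>auto simp: boxed_def\<close>)
  from to_Box from_Box show ?thesis by (simp add: Lh_equiv_def)
qed

lemma Lh_equiv_read_at_tr: "wf (Box k C) \<Longrightarrow> Lh_equiv T (read_at T (tr C) k) C"
proof (induction C arbitrary: k)
  case (Neg A)
  then have "Lh_equiv T (read_at T (tr A) k) A" by simp
  then show ?case using Lh_equiv_cong(1) by fastforce
next
  case (Conj A B)
  then show ?case by (simp add: Lh_equiv_cong)
next
  case (Disj A B)
  then show ?case by (simp add: Lh_equiv_cong)
next
  case (Imp A B)
  then show ?case by (simp add: Lh_equiv_cong)
next
  case (Box n A)
  have "Lh_equiv T (boxed T (\<lambda>m. Imp (read_at T (qconj n) m) (read_at T (tr A) m)) k) (Box n A)"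
  proof (rule Lh_equiv_boxed_guarded)
    show "\<forall>m\<ge>n. Lh_equiv T (read_at T (tr A) m) A"
      using Box by (fastforce intro: Box.IH)
  qed (use Box.prems wf_read_at in auto)
  then show ?case by (simp add: read_at_MImp_eq)
qed (auto simp: Lh_equiv_def ptaut_def intro: Lh.taut)

lemma mBigConj_map_tr: "mBigConj (map tr As) = tr (bigConj As)"
  by (induction As) (simp_all add: mBigConj_def)

lemma finite_boxes: "finite (boxes A)"
  by (induction A) auto

lemma Lh_if_Lm_tr:
  assumes "wf C" "Lm T (tr C)"
  shows "Lh T C"
proof -
  define k where "k = Suc (Max (boxes C))"
  have "wf (Box k C)" using assms(1) finite_boxes[of C] by (auto simp: k_def less_Suc_eq_le)
  then have "Lh T (Imp (read_at T (tr C) k) C)" using Lh_equiv_read_at_tr Lh_equiv_def by blast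
  with Lh_read_at[OF assms(2)] show ?thesis by (rule Lh.mp)
qed

lemma Lh_derives_if_Lm_derives_tr:
  assumes "\<forall>B\<in>\<Gamma>. wf B" "wf A" "Lm_derives T (tr ` \<Gamma>) (tr A)"
  shows "Lh_derives T \<Gamma> A"
proof -
  obtain Ds where "set Ds \<subseteq> tr ` \<Gamma>" and Ds: "Lm T (MImp (mBigConj Ds) (tr A))"
    using assms(3) unfolding Lm_derives_def by blast
  then have "Ds \<in> map tr ` lists \<Gamma>" by (auto simp flip: lists_image)
  then obtain Bs where "set Bs \<subseteq> \<Gamma>" and "Ds = map tr Bs" by auto
  with Ds have "set Bs \<subseteq> \<Gamma>" "Lm T (MImp (mBigConj (map tr Bs)) (tr A))" by simp_all
  moreover from this have "Lh T (Imp (bigConj Bs) A)"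
    using assms(1,2) by (intro Lh_if_Lm_tr) (auto simp: mBigConj_map_tr)
  ultimately show ?thesis unfolding Lh_derives_def by blast
qed

theorem theorem3p11:
  fixes \<Gamma> :: "'a fm set" and A :: "'a fm"
  assumes "\<forall>B\<in>\<Gamma>. wf B" and "wf A"
  shows "(Lm_derives False (tr ` \<Gamma>) (tr A) \<longrightarrow> Lh_derives False \<Gamma> A)
       \<and> (Lm_derives True (tr ` \<Gamma>) (tr A) \<longrightarrow> Lh_derives True \<Gamma> A)"
  using Lh_derives_if_Lm_derives_tr[OF assms] by blast

end
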